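(* Let $(d(t),\,t\ge0)$ be a nonnegative, locally integrable demand function and fix the initial energy configuration. For a discharge-only policy $\pi$ define $\tau(\pi)=\sup\{\tilde T\ge0:\ \text{the unserved energy of }\pi\text{ over }[0,\tilde T]\text{ equals }0\}$. Then $\tau(\mathrm{GGDDF})\ge\tau(\pi)$ for every discharge-only policy $\pi$; that is, the GGDDF policy maximises the time until the stores are first unable to serve all demand.
   Context: A finite set $\mathcal S$ of energy stores is given. Store $i\in\mathcal S$ has capacity $\overline E_i>0$ and maximum discharge rate $P_i>0$. A (discharge-only) policy is a choice of measurable rate functions $(r_i(t),\,t\ge0)$, $i\in\mathcal S$, with stored energies $E_i(t)=E_i(0)-\int_0^t r_i(u)\,du$, subject to $0\le E_i(t)\le\overline E_i$, $0\le r_i(t)\le P_i$ and $\sum_{i\in\mathcal S}r_i(t)\le d(t)$ for all $t\ge0$, where $(d(t),\,t\ge0)$ is a nonnegative demand function. The unserved energy over $[0,T]$ is $\int_0^T\max\bigl(d(t)-\sum_{i}r_i(t),0\bigr)dt$. GGDDF (greedy greatest-discharge-duration-first) policy: at (almost) every time $t$, the total served rate is $\bar d(t)=\min\bigl(d(t),\sum_{i:E_i(t)>0}P_i\bigr)$, and it is allocated as follows: the nonempty stores are partitioned into groups $G_1,G_2,\dots$ of equal discharge-duration $E_i(t)/P_i$, listed in strictly decreasing order of that duration; letting $m$ be the least index with $\sum_{k\le m}\sum_{i\in G_k}P_i\ge\bar d(t)$, every store in $G_k$ with $k<m$ discharges at rate $P_i$, every store $i\in G_m$ discharges at rate $\lambda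 P_i$ with $\lambda\in(0,1]$ chosen so that $\sum_i r_i(t)=\bar d(t)$, and all other stores have rate $0$ (all rates are $0$ if $\bar d(t)=0$). *)

theory Defs
  imports "HOL-Analysis.Analysis"
begin

definition energy :: "('s \<Rightarrow> real) \<Rightarrow> ('s \<Rightarrow> real \<Rightarrow> real) \<Rightarrow> 's \<Rightarrow> real \<Rightarrow> real" where
  "energy E0 r i t = E0 i - (LINT u:{0..t}|lborel. r i u)"

definition is_policy ::
  "'s set \<Rightarrow> ('s \<Rightarrow> real) \<Rightarrow> ('s \<Rightarrow> real) \<Rightarrow> (real \<Rightarrow> real) \<Rightarrow> ('s \<Rightarrow> real)
   \<Rightarrow> ('s \<Rightarrow> real \<Rightarrow> real) \<Rightarrow> bool" where
  "is_policy S Ebar P d E0 r \<longleftrightarrow>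
     (\<forall>i\<in>S. set_borel_measurable lborel {0..} (r i)) \<and>
     (\<forall>t\<ge>0. (\<forall>i\<in>S. 0 \<le> energy E0 r i t \<and> energy E0 r i t \<le> Ebar i
                       \<and> 0 \<le> r i t \<and> r i t \<le> P i)
            \<and> (\<Sum>i\<in>S. r i t) \<le> d t)"

definition unserved :: "'s set \<Rightarrow> (real \<Rightarrow> real) \<Rightarrow> ('s \<Rightarrow> real \<Rightarrow> real) \<Rightarrow> real \<Rightarrow> real" where
  "unserved S d r T = (LINT t:{0..T}|lborel. max (d t - (\<Sum>i\<in>S. r i t)) 0)"

definition tau :: "'s set \<Rightarrow> (real \<Rightarrow> real) \<Rightarrow> ('s \<Rightarrow> real \<Rightarrow> real) \<Rightarrow> ereal" where
  "tau S d r = Sup (ereal ` {T. T \<ge> 0 \<and> unserved S d r T = 0})"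

text \<open>Groups of equal discharge duration E i / P i among nonempty stores; \<theta> is the
  duration of the marginal group G_m; stores of strictly larger duration (groups
  before G_m) discharge at full rate, stores of G_m at rate lam P i, others at 0.
  The least-index condition on m is the two inequalities on cumulative rates.\<close>
definition ggddf_rule ::
  "'s set \<Rightarrow> ('s \<Rightarrow> real) \<Rightarrow> real \<Rightarrow> ('s \<Rightarrow> real) \<Rightarrow> ('s \<Rightarrow> real) \<Rightarrow> bool" where
  "ggddf_rule S P dt E rt \<longleftrightarrow>
     (let N = {i\<in>S. E i > 0};
          dur = (\<lambda>i. E i / P i);
          dbar = min dt (\<Sum>i\<in>N. P i)
      in (dbar = 0 \<longrightarrow> (\<forall>i\<in>S. rt i = 0)) \<and>
         (dbar \<noteq> 0 \<longrightarrow>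
            (\<exists>\<theta>\<in>dur ` N. \<exists>lam. 0 < lam \<and> lam \<le> 1 \<and>
               (\<Sum>i\<in>{i\<in>N. dur i > \<theta>}. P i) < dbar \<and>
               dbar \<le> (\<Sum>i\<in>{i\<in>N. dur i \<ge> \<theta>}. P i) \<and>
               (\<forall>i\<in>S. rt i = (if i \<in> N \<and> dur i > \<theta> then P i
                               else if i \<in> N \<and> dur i = \<theta> then lam * P i
                               else 0)) \<and>
               (\<Sum>i\<in>S. rt i) = dbar)))"

definition is_ggddf ::
  "'s set \<Rightarrow> ('s \<Rightarrow> real) \<Rightarrow> ('s \<Rightarrow> real) \<Rightarrow> (real \<Rightarrow> real) \<Rightarrow> ('s \<Rightarrow> real)
   \<Rightarrow> ('s \<Rightarrow> real \<Rightarrow> real) \<Rightarrow> bool" where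
  "is_ggddf S Ebar P d E0 r \<longleftrightarrow>
     is_policy S Ebar P d E0 r \<and>
     (AE t in lborel. t \<ge> 0 \<longrightarrow>
        ggddf_rule S P (d t) (\<lambda>i. energy E0 r i t) (\<lambda>i. r i t))"

end

theory Submission
  imports Defs
begin

text \<open>Write \<open>dur\<^sub>i(t) = E\<^sub>i(t) / P\<^sub>i\<close>. Whenever \<open>dur\<^sub>j < dur\<^sub>i\<close>, GGDDF discharges store \<open>i\<close>
  at least as fast relative to its rate as store \<open>j\<close>, so the gap \<open>dur\<^sub>i - dur\<^sub>j\<close> cannot
  grow while it is positive. Consequently a store that is still nonempty at time \<open>t\<close> had,
  throughout \<open>[0, t]\<close>, a strictly larger duration than every store already empty at \<open>t\<close>:
  the set \<open>A\<close> of stores nonempty at \<open>t\<close> always formed the top groups of the greedy order,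
  from which GGDDF served \<open>min (d, \<Sum>\<^sub>A P)\<close>, the most any policy can draw from \<open>A\<close>. Hence
  every policy leaves at least as much energy in \<open>A\<close> as GGDDF, which leaves none outside
  \<open>A\<close>. Minimal remaining energy means minimal unserved energy on every \<open>[0, T]\<close>, so the
  set of times without unserved energy only grows when passing to GGDDF.\<close>

lemma set_integrable_sum:
  fixes f :: "'i \<Rightarrow> 'a \<Rightarrow> real"
  assumes "\<And>i. i \<in> I \<Longrightarrow> set_integrable M A (f i)"
  shows "set_integrable M A (\<lambda>x. \<Sum>i\<in>I. f i x)"
  using assms unfolding set_integrable_def by (simp add: sum_distrib_left)

lemma set_integral_sum:
  fixes f :: "'i \<Rightarrow> 'a \<Rightarrow> real"
  assumes "\<And>i. i \<in> I \<Longrightarrow> set_integrable M A (f i)"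
  shows "(LINT x:A|M. (\<Sum>i\<in>I. f i x)) = (\<Sum>i\<in>I. LINT x:A|M. f i x)"
  using assms unfolding set_integrable_def set_lebesgue_integral_def
  by (simp add: sum_distrib_left)

lemma set_integral_nonneg_AE:
  fixes f :: "'a \<Rightarrow> real"
  assumes "AE x in M. x \<in> A \<longrightarrow> 0 \<le> f x"
  shows "0 \<le> (LINT x:A|M. f x)"
  unfolding set_lebesgue_integral_def
  by (rule integral_nonneg_AE) (use assms in \<open>auto simp: indicator_def\<close>)

lemma is_policy_set_integrable:
  assumes pol: "is_policy S Ebar P d E0 r" and i: "i \<in> S" and a: "0 \<le> a"
  shows "set_integrable lborel {a..b} (r i)"
proof -
  have "set_integrable lborel {a..b} (\<lambda>_. P i)"
    by (simp add: set_integrable_def emeasure_lborel_Icc_eq)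
  moreover have "set_borel_measurable lborel {a..b} (r i)"
    by (rule set_borel_measurable_subset[of _ "{0..}"]) (use pol i a in \<open>auto simp: is_policy_def\<close>)
  moreover have "AE x in lborel. x \<in> {a..b} \<longrightarrow> norm (r i x) \<le> norm (P i)"
  proof (intro AE_I2 impI)
    fix x assume "x \<in> {a..b}"
    then have "0 \<le> r i x \<and> r i x \<le> P i" using pol i a unfolding is_policy_def by auto
    then show "norm (r i x) \<le> norm (P i)" by simp
  qed
  ultimately show ?thesis by (rule set_integrable_bound)
qed

lemma is_policy_rate_integral:
  assumes "is_policy S Ebar P d E0 r" "i \<in> S" "0 \<le> a"
  shows "r i integrable_on {a..b}" "(LINT x:{a..b}|lborel. r i x) = integral {a..b} (r i)"
  using set_borel_integral_eq_integral[OF is_policy_set_integrable[OF assms]] by auto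

lemma energy_split:
  assumes pol: "is_policy S Ebar P d E0 r" and i: "i \<in> S" and "0 \<le> a" "a \<le> t"
  shows "energy E0 r i t = energy E0 r i a - (LINT x:{a..t}|lborel. r i x)"
proof -
  have "integral {0..a} (r i) + integral {a..t} (r i) = integral {0..t} (r i)"
    by (rule Henstock_Kurzweil_Integration.integral_combine)
      (use assms is_policy_rate_integral[OF pol i, of 0 t] in auto)
  then show ?thesis
    using assms is_policy_rate_integral(2)[OF pol i] unfolding energy_def by simp
qed

lemma energy_antimono:
  assumes pol: "is_policy S Ebar P d E0 r" and i: "i \<in> S" and "0 \<le> a" "a \<le> t"
  shows "energy E0 r i t \<le> energy E0 r i a"
proof -
  have "0 \<le> (LINT x:{a..t}|lborel. r i x)"
    by (rule set_integral_nonneg_AE, rule AE_I2) (use assms in \<open>auto simp: is_policy_def\<close>)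
  then show ?thesis using energy_split[OF assms] by simp
qed

lemma energy_continuous_on:
  assumes pol: "is_policy S Ebar P d E0 r" and i: "i \<in> S" and "0 \<le> u"
  shows "continuous_on {u..t} (energy E0 r i)"
proof -
  have "continuous_on {0..t} (\<lambda>x. integral {0..x} (r i))"
    by (rule indefinite_integral_continuous_1) (use is_policy_rate_integral[OF pol i] in auto)
  then have "continuous_on {0..t} (\<lambda>x. E0 i - integral {0..x} (r i))"
    by (intro continuous_intros)
  then have "continuous_on {0..t} (energy E0 r i)"
    by (rule continuous_on_eq) (use is_policy_rate_integral(2)[OF pol i] in \<open>auto simp: energy_def\<close>)
  then show ?thesis by (rule continuous_on_subset) (use \<open>0 \<le> u\<close> in auto)
qed

lemma energy_sum_eq:
  assumes pol: "is_policy S Ebar P d E0 r" and "A \<subseteq> S" and "0 \<le> t"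
  shows "(\<Sum>i\<in>A. energy E0 r i t) = (\<Sum>i\<in>A. E0 i) - (LINT u:{0..t}|lborel. (\<Sum>i\<in>A. r i u))"
proof -
  have "(LINT u:{0..t}|lborel. (\<Sum>i\<in>A. r i u)) = (\<Sum>i\<in>A. LINT u:{0..t}|lborel. r i u)"
    by (rule set_integral_sum) (use is_policy_set_integrable[OF pol] assms(2,3) in blast)
  then show ?thesis unfolding energy_def by (simp add: sum_subtractf)
qed

lemma unserved_eq_energy_balance:
  assumes pol: "is_policy S Ebar P d E0 r" and d: "set_integrable lborel {0..T} d" and "0 \<le> T"
  shows "unserved S d r T = (LINT t:{0..T}|lborel. d t) - (\<Sum>i\<in>S. E0 i) + (\<Sum>i\<in>S. energy E0 r i T)"
proof -
  have served: "set_integrable lborel {0..T} (\<lambda>t. \<Sum>i\<in>S. r i t)"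
    by (rule set_integrable_sum) (use is_policy_set_integrable[OF pol] in blast)
  have "unserved S d r T = (LINT t:{0..T}|lborel. d t - (\<Sum>i\<in>S. r i t))"
    unfolding unserved_def
    by (rule set_lebesgue_integral_cong) (use pol in \<open>auto simp: is_policy_def\<close>)
  also have "\<dots> = (LINT t:{0..T}|lborel. d t) - (LINT t:{0..T}|lborel. (\<Sum>i\<in>S. r i t))"
    by (rule set_integral_diff(2)[OF d served])
  finally show ?thesis using energy_sum_eq[OF pol order_refl \<open>0 \<le> T\<close>] by simp
qed

lemma unserved_nonneg: "0 \<le> unserved S d r T"
  unfolding unserved_def by (rule set_integral_nonneg_AE) simp

lemma ggddf_rule_cases:
  assumes "ggddf_rule S P dt E rt"
  obtains (idle) "\<forall>i\<in>S. rt i = 0" "min dt (\<Sum>i\<in>{i\<in>S. 0 < E i}. P i) = 0"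
  | (marginal) \<theta> lam where "0 < lam" "lam \<le> 1"
    "\<forall>i\<in>S. rt i = (if 0 < E i \<and> \<theta> < E i / P i then P i
                    else if 0 < E i \<and> E i / P i = \<theta> then lam * P i else 0)"
    "(\<Sum>i\<in>S. rt i) = min dt (\<Sum>i\<in>{i\<in>S. 0 < E i}. P i)"
proof (cases "min dt (\<Sum>i\<in>{i\<in>S. 0 < E i}. P i) = 0")
  case True
  then show ?thesis using assms idle unfolding ggddf_rule_def Let_def by simp
next
  case False
  then obtain \<theta> lam where "0 < lam" "lam \<le> 1"
    "\<forall>i\<in>S. rt i = (if i \<in> {i\<in>S. 0 < E i} \<and> \<theta> < E i / P i then P i
                    else if i \<in> {i\<in>S. 0 < E i} \<and> E i / P i = \<theta> then lam * P i else 0)"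
    "(\<Sum>i\<in>S. rt i) = min dt (\<Sum>i\<in>{i\<in>S. 0 < E i}. P i)"
    using assms unfolding ggddf_rule_def Let_def by meson
  then show ?thesis by (intro marginal[of lam \<theta>]) simp_all
qed

lemma ggddf_rule_rate_mono:
  assumes rule: "ggddf_rule S P dt E rt" and "i \<in> S" "j \<in> S" "0 < P i" "0 < P j"
    and longer: "E j / P j < E i / P i"
  shows "rt j / P j \<le> rt i / P i"
  using rule
proof (cases rule: ggddf_rule_cases)
  case idle
  then show ?thesis using \<open>i \<in> S\<close> \<open>j \<in> S\<close> by simp
next
  case (marginal \<theta> lam)
  then have rt: "rt k = (if 0 < E k \<and> \<theta> < E k / P k then P k
                    else if 0 < E k \<and> E k / P k = \<theta> then lam * P k else 0)" if "k \<in> S" for k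
    using that by blast
  show ?thesis
  proof (cases "0 < E j \<and> \<theta> \<le> E j / P j")
    case True
    then have "0 < E i / P i" "\<theta> < E i / P i"
      using longer \<open>0 < P j\<close> by (auto intro: order.strict_trans2 divide_pos_pos)
    then have "rt i = P i" using rt[OF \<open>i \<in> S\<close>] \<open>0 < P i\<close> by (simp add: zero_less_divide_iff)
    moreover have "rt j \<le> P j" using rt[OF \<open>j \<in> S\<close>] marginal \<open>0 < P j\<close> by auto
    ultimately show ?thesis using \<open>0 < P i\<close> \<open>0 < P j\<close> by simp
  next
    case False
    then show ?thesis using rt[OF \<open>i \<in> S\<close>] rt[OF \<open>j \<in> S\<close>] marginal \<open>0 < P i\<close> by auto
  qed
qed

lemma ggddf_rule_serves_top_stores:
  assumes rule: "ggddf_rule S P dt E rt" and fin: "finite S" and P_pos: "\<forall>i\<in>S. 0 < P i"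
    and "A \<subseteq> S" and nonempty: "\<forall>i\<in>A. 0 < E i"
    and top: "\<forall>i\<in>A. \<forall>j\<in>S - A. E j / P j < E i / P i"
  shows "min dt (\<Sum>i\<in>A. P i) \<le> (\<Sum>i\<in>A. rt i)"
proof -
  have "(\<Sum>i\<in>A. P i) \<le> (\<Sum>i\<in>{i\<in>S. 0 < E i}. P i)"
    by (rule sum_mono2) (use fin \<open>A \<subseteq> S\<close> nonempty P_pos in \<open>auto intro: less_imp_le\<close>)
  then have served_le: "min dt (\<Sum>i\<in>A. P i) \<le> min dt (\<Sum>i\<in>{i\<in>S. 0 < E i}. P i)"
    by linarith
  from rule show ?thesis
  proof (cases rule: ggddf_rule_cases)
    case idle
    then show ?thesis using served_le \<open>A \<subseteq> S\<close> by (simp add: subset_eq)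
  next
    case (marginal \<theta> lam)
    show ?thesis
    proof (cases "\<forall>i\<in>A. \<theta> < E i / P i")
      case True
      then have "(\<Sum>i\<in>A. rt i) = (\<Sum>i\<in>A. P i)"
        using marginal(3) \<open>A \<subseteq> S\<close> nonempty by (intro sum.cong) auto
      then show ?thesis by simp
    next
      case False
      then obtain i0 where "i0 \<in> A" "E i0 / P i0 \<le> \<theta>" by auto
      have "rt j = 0" if "j \<in> S - A" for j
      proof -
        have "E j / P j < E i0 / P i0" using top \<open>i0 \<in> A\<close> that by blast
        then have "E j / P j < \<theta>" using \<open>E i0 / P i0 \<le> \<theta>\<close> by linarith
        then show ?thesis using marginal(3) that by auto
      qed
      then have "(\<Sum>i\<in>A. rt i) = (\<Sum>i\<in>S. rt i)"
        using fin \<open>A \<subseteq> S\<close> by (intro sum.mono_neutral_left) auto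
      then show ?thesis using marginal(4) served_le by simp
    qed
  qed
qed

context
  fixes S :: "'s set" and Ebar P E0 :: "'s \<Rightarrow> real" and d :: "real \<Rightarrow> real"
    and g :: "'s \<Rightarrow> real \<Rightarrow> real"
  assumes fin: "finite S" and P_pos: "\<forall>i\<in>S. 0 < P i" and ggddf: "is_ggddf S Ebar P d E0 g"
begin

lemma ggddf_policy: "is_policy S Ebar P d E0 g"
  using ggddf unfolding is_ggddf_def by simp

lemma ggddf_rule_AE:
  "AE t in lborel. 0 \<le> t \<longrightarrow> ggddf_rule S P (d t) (\<lambda>i. energy E0 g i t) (\<lambda>i. g i t)"
  using ggddf unfolding is_ggddf_def by simp

lemma ggddf_duration_gap_antimono:
  assumes i: "i \<in> S" and j: "j \<in> S" and "0 \<le> a" "a \<le> t"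
    and longer: "\<forall>v\<in>{a<..t}. energy E0 g j v / P j < energy E0 g i v / P i"
  shows "energy E0 g i t / P i - energy E0 g j t / P j
           \<le> energy E0 g i a / P i - energy E0 g j a / P j"
proof -
  have "AE x in lborel. x \<in> {a..t} \<longrightarrow> 0 \<le> g i x / P i - g j x / P j"
    using ggddf_rule_AE AE_lborel_singleton[of a]
  proof eventually_elim
    case (elim x)
    show ?case
    proof
      assume "x \<in> {a..t}"
      then have "x \<in> {a<..t}" "0 \<le> x" using elim(2) \<open>0 \<le> a\<close> by auto
      then have "ggddf_rule S P (d x) (\<lambda>i. energy E0 g i x) (\<lambda>i. g i x)"
        and "energy E0 g j x / P j < energy E0 g i x / P i"
        using elim(1) longer by auto
      from ggddf_rule_rate_mono[OF this(1) i j _ _ this(2)]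
      have "g j x / P j \<le> g i x / P i" using P_pos i j by simp
      then show "0 \<le> g i x / P i - g j x / P j" by simp
    qed
  qed
  then have "0 \<le> (LINT x:{a..t}|lborel. g i x / P i - g j x / P j)"
    by (rule set_integral_nonneg_AE)
  also have "\<dots> = (LINT x:{a..t}|lborel. g i x) / P i - (LINT x:{a..t}|lborel. g j x) / P j"
    using is_policy_set_integrable[OF ggddf_policy _ \<open>0 \<le> a\<close>, of _ t] i j by simp
  finally show ?thesis
    using energy_split[OF ggddf_policy i \<open>0 \<le> a\<close> \<open>a \<le> t\<close>]
      energy_split[OF ggddf_policy j \<open>0 \<le> a\<close> \<open>a \<le> t\<close>]
    by (simp add: diff_divide_distrib)
qed

text \<open>If the gap were nonpositive at \<open>u\<close>, take its last nonpositive point \<open>a\<close> before \<open>t\<close>: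
  on \<open>(a, t]\<close> the gap is positive and hence, by the previous lemma, at most its value at \<open>a\<close>.\<close>

lemma ggddf_preserves_duration_order:
  assumes i: "i \<in> S" and j: "j \<in> S" and "0 \<le> u" "u \<le> t"
    and "0 < energy E0 g i t" and "energy E0 g j t \<le> 0"
  shows "energy E0 g j u / P j < energy E0 g i u / P i"
proof (rule ccontr)
  define gap where "gap v = energy E0 g i v / P i - energy E0 g j v / P j" for v
  define W where "W = {v \<in> {u..t}. gap v \<le> 0}"
  assume "\<not> ?thesis"
  then have "u \<in> W" unfolding W_def gap_def using \<open>u \<le> t\<close> by auto
  have "continuous_on {u..t} gap"
    unfolding gap_def using P_pos i j
    by (intro continuous_intros energy_continuous_on[OF ggddf_policy i \<open>0 \<le> u\<close>]
        energy_continuous_on[OF ggddf_policy j \<open>0 \<le> u\<close>]) auto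
  then have "closed W"
    unfolding W_def by (intro continuous_on_closed_Collect_le continuous_on_const) auto
  moreover have "bdd_above W" unfolding W_def by (rule bdd_aboveI[of _ t]) auto
  ultimately have "Sup W \<in> W" using closed_contains_Sup \<open>u \<in> W\<close> by blast
  then have a: "u \<le> Sup W" "Sup W \<le> t" "gap (Sup W) \<le> 0" unfolding W_def by auto
  have "energy E0 g j v / P j < energy E0 g i v / P i" if "v \<in> {Sup W<..t}" for v
  proof -
    have "v \<notin> W" using that cSup_upper[OF _ \<open>bdd_above W\<close>, of v] by auto
    then show ?thesis using that a unfolding W_def gap_def by auto
  qed
  then have "gap t \<le> gap (Sup W)"
    unfolding gap_def using a \<open>0 \<le> u\<close> by (intro ggddf_duration_gap_antimono[OF i j]) auto
  moreover have "energy E0 g j t = 0"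
    using ggddf_policy j \<open>0 \<le> u\<close> \<open>u \<le> t\<close> \<open>energy E0 g j t \<le> 0\<close> unfolding is_policy_def
    by (meson order.antisym order.trans)
  then have "0 < gap t" unfolding gap_def using \<open>0 < energy E0 g i t\<close> P_pos i by simp
  ultimately show False using a by linarith
qed

lemma ggddf_serves_stores_nonempty_at:
  assumes pol: "is_policy S Ebar P d E0 r" and "0 \<le> u" "u \<le> t"
    and rule: "ggddf_rule S P (d u) (\<lambda>i. energy E0 g i u) (\<lambda>i. g i u)"
  shows "(\<Sum>i\<in>{i\<in>S. 0 < energy E0 g i t}. r i u) \<le> (\<Sum>i\<in>{i\<in>S. 0 < energy E0 g i t}. g i u)"
proof -
  define A where "A = {i\<in>S. 0 < energy E0 g i t}"
  have "A \<subseteq> S" unfolding A_def by auto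
  have nonempty: "0 < energy E0 g i u" if "i \<in> A" for i
  proof -
    have "i \<in> S" "0 < energy E0 g i t" using that unfolding A_def by auto
    then show ?thesis using energy_antimono[OF ggddf_policy \<open>i \<in> S\<close> \<open>0 \<le> u\<close> \<open>u \<le> t\<close>] by linarith
  qed
  have top: "energy E0 g j u / P j < energy E0 g i u / P i" if "i \<in> A" "j \<in> S - A" for i j
  proof -
    have "i \<in> S" "0 < energy E0 g i t" "j \<in> S" "energy E0 g j t \<le> 0"
      using that unfolding A_def by auto
    then show ?thesis using ggddf_preserves_duration_order \<open>0 \<le> u\<close> \<open>u \<le> t\<close> by blast
  qed
  have r_bounds: "0 \<le> r i u \<and> r i u \<le> P i" if "i \<in> S" for i
    using pol \<open>0 \<le> u\<close> that unfolding is_policy_def by blast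
  have "min (d u) (\<Sum>i\<in>A. P i) \<le> (\<Sum>i\<in>A. g i u)"
    using ggddf_rule_serves_top_stores[OF rule fin P_pos \<open>A \<subseteq> S\<close>] nonempty top by blast
  moreover have "(\<Sum>i\<in>A. r i u) \<le> (\<Sum>i\<in>S. r i u)"
    using r_bounds fin \<open>A \<subseteq> S\<close> by (intro sum_mono2) auto
  moreover have "(\<Sum>i\<in>S. r i u) \<le> d u"
    using pol \<open>0 \<le> u\<close> unfolding is_policy_def by blast
  moreover have "(\<Sum>i\<in>A. r i u) \<le> (\<Sum>i\<in>A. P i)"
    using r_bounds \<open>A \<subseteq> S\<close> by (intro sum_mono) auto
  ultimately show ?thesis unfolding A_def by linarith
qed

lemma ggddf_energy_sum_le:
  assumes pol: "is_policy S Ebar P d E0 r" and "0 \<le> t"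
  shows "(\<Sum>i\<in>S. energy E0 g i t) \<le> (\<Sum>i\<in>S. energy E0 r i t)"
proof -
  define A where "A = {i\<in>S. 0 < energy E0 g i t}"
  have "A \<subseteq> S" unfolding A_def by auto
  have "(LINT u:{0..t}|lborel. (\<Sum>i\<in>A. r i u)) \<le> (LINT u:{0..t}|lborel. (\<Sum>i\<in>A. g i u))"
  proof (rule set_integral_mono_AE)
    show "set_integrable lborel {0..t} (\<lambda>u. \<Sum>i\<in>A. r i u)"
      "set_integrable lborel {0..t} (\<lambda>u. \<Sum>i\<in>A. g i u)"
      using is_policy_set_integrable[OF pol] is_policy_set_integrable[OF ggddf_policy] \<open>A \<subseteq> S\<close>
      by (auto intro!: set_integrable_sum)
    show "AE u\<in>{0..t} in lborel. (\<Sum>i\<in>A. r i u) \<le> (\<Sum>i\<in>A. g i u)"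
      using ggddf_rule_AE
    proof eventually_elim
      case (elim u)
      show ?case
        using ggddf_serves_stores_nonempty_at[OF pol _ _ elim[rule_format]] unfolding A_def by simp
    qed
  qed
  then have "(\<Sum>i\<in>A. energy E0 g i t) \<le> (\<Sum>i\<in>A. energy E0 r i t)"
    using energy_sum_eq[OF ggddf_policy \<open>A \<subseteq> S\<close> \<open>0 \<le> t\<close>] energy_sum_eq[OF pol \<open>A \<subseteq> S\<close> \<open>0 \<le> t\<close>]
    by linarith
  moreover have "(\<Sum>i\<in>S. energy E0 g i t) = (\<Sum>i\<in>A. energy E0 g i t)"
  proof (rule sum.mono_neutral_right[OF fin \<open>A \<subseteq> S\<close>], rule ballI)
    fix i assume "i \<in> S - A"
    moreover have "0 \<le> energy E0 g i t" if "i \<in> S"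
      using ggddf_policy \<open>0 \<le> t\<close> that unfolding is_policy_def by blast
    ultimately show "energy E0 g i t = 0" unfolding A_def by force
  qed
  moreover have "(\<Sum>i\<in>A. energy E0 r i t) \<le> (\<Sum>i\<in>S. energy E0 r i t)"
    using pol \<open>0 \<le> t\<close> fin \<open>A \<subseteq> S\<close> unfolding is_policy_def by (intro sum_mono2) auto
  ultimately show ?thesis by linarith
qed

lemma ggddf_unserved_le:
  assumes pol: "is_policy S Ebar P d E0 r"
    and "set_integrable lborel {0..T} d" and "0 \<le> T"
  shows "unserved S d g T \<le> unserved S d r T"
  using unserved_eq_energy_balance[OF ggddf_policy assms(2,3)]
    unserved_eq_energy_balance[OF pol assms(2,3)] ggddf_energy_sum_le[OF pol \<open>0 \<le> T\<close>]
  by linarith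

end

theorem mainTheorem5:
  fixes S :: "'s set" and Ebar P E0 :: "'s \<Rightarrow> real" and d :: "real \<Rightarrow> real"
    and g r :: "'s \<Rightarrow> real \<Rightarrow> real"
  assumes "finite S"
    and "\<forall>i\<in>S. Ebar i > 0 \<and> P i > 0"
    and "\<forall>i\<in>S. 0 \<le> E0 i \<and> E0 i \<le> Ebar i"
    and "\<forall>t\<ge>0. d t \<ge> 0"
    and "\<forall>T. set_integrable lborel {0..T} d"
    and "is_ggddf S Ebar P d E0 g"
    and "is_policy S Ebar P d E0 r"
  shows "tau S d g \<ge> tau S d r"
proof -
  have P_pos: "\<forall>i\<in>S. 0 < P i" using assms(2) by blast
  have "unserved S d g T = 0" if "0 \<le> T" "unserved S d r T = 0" for T
  proof -
    have "unserved S d g T \<le> unserved S d r T"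
      using ggddf_unserved_le[OF assms(1) P_pos assms(6,7)] assms(5) \<open>0 \<le> T\<close> by blast
    then show ?thesis using unserved_nonneg[of S d g T] \<open>unserved S d r T = 0\<close> by linarith
  qed
  then show ?thesis
    unfolding tau_def by (intro Sup_subset_mono image_mono) auto
qed

end
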